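(* Let $D\subset\mathbb R^n$ be a domain, $\theta\in(-\pi,\pi]$, and let $k\in C^2([0,1]\times D)$ satisfy the degenerate special Lagrangian equation $$\mathrm{Im}\big(e^{-\sqrt{-1}\theta}\det(I_n+\sqrt{-1}\nabla^2k)\big)=0,\qquad \mathrm{Re}\big(e^{-\sqrt{-1}\theta}\det(I+\sqrt{-1}\nabla_x^2k)\big)>0$$ at every point. Let $M(t,x)=\mathrm{Re}\big(e^{-\sqrt{-1}\theta}\mathrm{cof}(I_n+\sqrt{-1}\nabla^2k(t,x))\big)$, so that the linearization of $u\mapsto\mathrm{Im}(e^{-\sqrt{-1}\theta}\det(I_n+\sqrt{-1}\nabla^2u))$ at $k$ is $\psi\mapsto\mathrm{tr}(M\nabla^2\psi)$. Then at every point $(t,x)$ with $\nabla\dot k(t,x)\ne0$, the matrix $M(t,x)$ is positive semidefinite with exactly one zero eigenvalue and its null space is spanned by $\nabla\dot k(t,x)$; at every critical point of $\dot k$ (i.e. $\nabla\dot k(t,x)=0$), $M(t,x)$ is positive semidefinite with exactly one nonzero eigenvalue.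
   Context: Coordinates on $[0,1]\times D$ are $(t,x)$; $\nabla^2$ is the full $(n+1)\times(n+1)$ Hessian in $(t,x)$ (with $t$ as the $0$-th coordinate), $\nabla^2_x$ the $n\times n$ Hessian in $x$, $\dot k=\partial_tk$, and $\nabla\dot k$ its full gradient in $(t,x)$. $I_n=\mathrm{diag}(0,1,\dots,1)\in\mathrm{Sym}(\mathbb R^{n+1})$, $I$ the $n\times n$ identity, $\mathrm{cof}$ the cofactor matrix. *)

theory Defs
  imports "HOL-Analysis.Analysis"
begin

text \<open>Coordinates on [0,1] x D inside R^(n+1): a point p :: real^('n::finite option) has
  time coordinate p $ None and space coordinates p $ Some i.\<close>

definition time_coord :: "real^('n::finite option) \<Rightarrow> real" where
  "time_coord p = p $ None"

definition space_part :: "real^('n::finite option) \<Rightarrow> real^'n" where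
  "space_part p = (\<chi> i. p $ Some i)"

definition cyl :: "(real^'n::finite) set \<Rightarrow> (real^('n::finite option)) set" where
  "cyl D = {p. time_coord p \<in> {0..1} \<and> space_part p \<in> D}"

text \<open>I_n = diag(0,1,...,1) in Sym(R^(n+1)), the 0-th (time) entry being 0.\<close>
definition In_mat :: "real^('n::finite option)^('n::finite option)" where
  "In_mat = (\<chi> i j. if i = j \<and> i \<noteq> None then 1 else 0)"

text \<open>Spatial block of an (n+1)x(n+1) matrix (the x-Hessian when applied to the full Hessian).\<close>
definition space_block :: "'a^('n::finite option)^('n::finite option) \<Rightarrow> 'a^'n::finite^'n" where
  "space_block A = (\<chi> i j. A $ Some i $ Some j)"

definition cmat :: "real^'n^'m \<Rightarrow> complex^'n^'m" where
  "cmat A = (\<chi> i j. complex_of_real (A $ i $ j))"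

definition cscale :: "complex \<Rightarrow> complex^'n::finite^'m::finite \<Rightarrow> complex^'n^'m" where
  "cscale c A = (\<chi> i j. c * A $ i $ j)"

definition Re_mat :: "complex^'n^'m \<Rightarrow> real^'n^'m" where
  "Re_mat A = (\<chi> i j. Re (A $ i $ j))"

text \<open>Cofactor matrix: cof(A)_(ij) = (-1)^(i+j) det(A with row i and column j deleted),
  which equals det of A with row i replaced by the j-th unit row vector (Laplace expansion);
  the latter form is used since the index type carries no ordering.\<close>
definition cof :: "'a::comm_ring_1^'n::finite^'n \<Rightarrow> 'a^'n::finite^'n" where
  "cof A = (\<chi> i j. det (\<chi> r c. if r = i then (if c = j then 1 else 0) else A $ r $ c))"

definition psd :: "real^'n::finite^'n \<Rightarrow> bool" where
  "psd M \<longleftrightarrow> transpose M = M \<and> (\<forall>w. 0 \<le> w \<bullet> (M *v w))"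

definition null_space :: "real^'n^'m \<Rightarrow> (real^'n::finite) set" where
  "null_space M = {w. M *v w = 0}"

definition lin_mat :: "real \<Rightarrow> real^('n::finite option)^('n option) \<Rightarrow> real^('n option)^('n option)" where
  "lin_mat \<theta> A = Re_mat (cscale (exp (- \<i> * complex_of_real \<theta>)) (cof (cmat In_mat + cscale \<i> (cmat A))))"

end

theory Submission
  imports Defs
begin

(*
  Schwarz's theorem, proved by applying the mean value theorem twice to a mixed second
  difference, makes the Hessian A of k symmetric at interior points of [0,1] x D, and
  continuity of A extends this to the whole cylinder.

  At a fixed point let N = I_n + iA, w = e^(-i theta) and c = w det N, which is real by the
  equation. For real v put u = w adj(N) v, so that N u = c v. As A is real symmetric,
  Re (u^* N u) is the sum of |u_j|^2 over the space indices j, which gives the identity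
  c (v . M v) = sum_j |u_j|^2. Testing it with the time direction e_0, where
  M_00 = Re (w det (I + i Hess_x k)) > 0, shows c >= 0, and c = 0 would force
  A e_0 = grad (dk/dt) = 0. Off the critical set therefore c > 0, M is positive
  semidefinite, and M v = 0 forces u to be a multiple of e_0, whence c v = i u_0 grad (dk/dt);
  conversely M grad (dk/dt) = 0 because the time row of N is i grad (dk/dt). At a critical
  point every cofactor of N other than the (0,0) one has a zero row or column, so
  M = M_00 e_0 e_0^T.
*)

section \<open>Symmetry of the Hessian\<close>

lemma has_derivative_along_line:
  assumes "(f has_derivative f') (at (c + x *\<^sub>R v) within S)"
    and "\<And>b. b \<in> T \<Longrightarrow> c + b *\<^sub>R v \<in> S"
  shows "((\<lambda>b. f (c + b *\<^sub>R v)) has_derivative (\<lambda>h. f' (h *\<^sub>R v))) (at x within T)"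
proof -
  have "((\<lambda>b. c + b *\<^sub>R v) has_derivative (\<lambda>h. h *\<^sub>R v)) (at x within T)"
    by (auto intro!: derivative_eq_intros)
  moreover have "(f has_derivative f') (at (c + x *\<^sub>R v) within (\<lambda>b. c + b *\<^sub>R v) ` T)"
    using assms(1) by (rule has_derivative_subset) (use assms(2) in auto)
  ultimately show ?thesis
    using diff_chain_within by (fastforce simp: o_def)
qed

lemma mixed_difference_mean_value:
  fixes k :: "real^'m::finite \<Rightarrow> real" and g :: "real^'m \<Rightarrow> real^'m"
    and H :: "real^'m \<Rightarrow> real^'m^'m"
  assumes grad: "\<And>q. q \<in> S \<Longrightarrow> (k has_derivative (\<lambda>h. g q \<bullet> h)) (at q within S)"
    and hess: "\<And>q. q \<in> S \<Longrightarrow> (g has_derivative (\<lambda>h. H q *v h)) (at q within S)"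
    and box: "\<And>a b. a \<in> {0..s} \<Longrightarrow> b \<in> {0..s} \<Longrightarrow> p + a *\<^sub>R u + b *\<^sub>R v \<in> S"
    and s: "0 < s"
  obtains a b where "a \<in> {0..s}" "b \<in> {0..s}"
    "k (p + s *\<^sub>R u + s *\<^sub>R v) - k (p + s *\<^sub>R u) - k (p + s *\<^sub>R v) + k p
       = s\<^sup>2 * ((H (p + a *\<^sub>R u + b *\<^sub>R v) *v u) \<bullet> v)"
proof -
  define \<phi> where "\<phi> b = k (p + s *\<^sub>R u + b *\<^sub>R v) - k (p + b *\<^sub>R v)" for b
  define \<phi>' where "\<phi>' b = (g (p + s *\<^sub>R u + b *\<^sub>R v) - g (p + b *\<^sub>R v)) \<bullet> v" for b
  have "\<exists>b\<in>{0<..<s}. \<phi> s - \<phi> 0 = (\<lambda>h. h * \<phi>' b) (s - 0)"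
  proof (rule mvt_simple[OF s])
    fix b assume b: "0 \<le> b" "b \<le> s"
    have A: "((\<lambda>b. k (p + s *\<^sub>R u + b *\<^sub>R v)) has_derivative
        (\<lambda>h. g (p + s *\<^sub>R u + b *\<^sub>R v) \<bullet> (h *\<^sub>R v))) (at b within {0..s})"
      by (rule has_derivative_along_line[OF grad]) (use box[of s] s b in auto)
    have B: "((\<lambda>b. k (p + b *\<^sub>R v)) has_derivative (\<lambda>h. g (p + b *\<^sub>R v) \<bullet> (h *\<^sub>R v)))
        (at b within {0..s})"
      by (rule has_derivative_along_line[OF grad]) (use box[of 0] s b in auto)
    from has_derivative_diff[OF A B]
    show "(\<phi> has_derivative (\<lambda>h. h * \<phi>' b)) (at b within {0..s})"
      unfolding \<phi>_def \<phi>'_def by (simp add: inner_diff_left algebra_simps)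
  qed
  then obtain b where b: "b \<in> {0<..<s}" and \<phi>: "\<phi> s - \<phi> 0 = s * \<phi>' b"
    by auto
  define \<psi> where "\<psi> a = g (p + a *\<^sub>R u + b *\<^sub>R v) \<bullet> v" for a
  define \<psi>' where "\<psi>' a = (H (p + a *\<^sub>R u + b *\<^sub>R v) *v u) \<bullet> v" for a
  have "\<exists>a\<in>{0<..<s}. \<psi> s - \<psi> 0 = (\<lambda>h. h * \<psi>' a) (s - 0)"
  proof (rule mvt_simple[OF s])
    fix a assume a: "0 \<le> a" "a \<le> s"
    have "((\<lambda>a. g (p + b *\<^sub>R v + a *\<^sub>R u)) has_derivative
        (\<lambda>h. H (p + b *\<^sub>R v + a *\<^sub>R u) *v (h *\<^sub>R u))) (at a within {0..s})"
      by (rule has_derivative_along_line[OF hess]) (use box b a in \<open>auto simp: add_ac\<close>)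
    from has_derivative_inner_left[OF this, of v]
    show "(\<psi> has_derivative (\<lambda>h. h * \<psi>' a)) (at a within {0..s})"
      unfolding \<psi>_def \<psi>'_def by (simp add: matrix_vector_mult_scaleR add_ac)
  qed
  then obtain a where a: "a \<in> {0<..<s}" and \<psi>: "\<psi> s - \<psi> 0 = s * \<psi>' a"
    by auto
  have "k (p + s *\<^sub>R u + s *\<^sub>R v) - k (p + s *\<^sub>R u) - k (p + s *\<^sub>R v) + k p = \<phi> s - \<phi> 0"
    by (simp add: \<phi>_def)
  also have "\<dots> = s * (\<psi> s - \<psi> 0)"
    by (simp add: \<phi> \<phi>'_def \<psi>_def inner_diff_left)
  finally show ?thesis
    using a b \<psi> by (intro that[of a b]) (auto simp: \<psi>'_def power2_eq_square)
qed

lemma mixed_partials_agree_nearby: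
  fixes k :: "real^'m::finite \<Rightarrow> real" and g :: "real^'m \<Rightarrow> real^'m"
    and H :: "real^'m \<Rightarrow> real^'m^'m"
  assumes grad: "\<And>q. q \<in> S \<Longrightarrow> (k has_derivative (\<lambda>h. g q \<bullet> h)) (at q within S)"
    and hess: "\<And>q. q \<in> S \<Longrightarrow> (g has_derivative (\<lambda>h. H q *v h)) (at q within S)"
    and ball: "ball p r \<subseteq> S" and s: "0 < s" "s * (norm u + norm v) < r"
  obtains x y where "dist x p \<le> s * (norm u + norm v)" "dist y p \<le> s * (norm u + norm v)"
    "x \<in> S" "y \<in> S" "(H x *v u) \<bullet> v = (H y *v v) \<bullet> u"
proof -
  have near: "dist (p + a *\<^sub>R u + b *\<^sub>R v) p \<le> s * (norm u + norm v)"
    if "a \<in> {0..s}" "b \<in> {0..s}" for a b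
  proof -
    have "dist (p + a *\<^sub>R u + b *\<^sub>R v) p \<le> a * norm u + b * norm v"
      using that by (simp add: dist_norm norm_triangle_le)
    also have "\<dots> \<le> s * norm u + s * norm v"
      using that by (intro add_mono mult_right_mono) auto
    finally show ?thesis
      by (simp add: distrib_left)
  qed
  have box: "p + a *\<^sub>R u + b *\<^sub>R v \<in> S" "p + a *\<^sub>R v + b *\<^sub>R u \<in> S"
    if "a \<in> {0..s}" "b \<in> {0..s}" for a b
    using near[OF that] near[OF that(2,1)] s(2) ball by (auto simp: dist_commute add_ac)
  obtain a b where ab: "a \<in> {0..s}" "b \<in> {0..s}" and eq1:
    "k (p + s *\<^sub>R u + s *\<^sub>R v) - k (p + s *\<^sub>R u) - k (p + s *\<^sub>R v) + k p
       = s\<^sup>2 * ((H (p + a *\<^sub>R u + b *\<^sub>R v) *v u) \<bullet> v)"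
    using mixed_difference_mean_value[OF grad hess box(1) s(1)] by blast
  obtain a' b' where ab': "a' \<in> {0..s}" "b' \<in> {0..s}" and eq2:
    "k (p + s *\<^sub>R v + s *\<^sub>R u) - k (p + s *\<^sub>R v) - k (p + s *\<^sub>R u) + k p
       = s\<^sup>2 * ((H (p + a' *\<^sub>R v + b' *\<^sub>R u) *v v) \<bullet> u)"
    using mixed_difference_mean_value[OF grad hess box(2) s(1)] by blast
  \<comment> \<open>Both are the same second difference of k over the parallelogram spanned by s u and s v.\<close>
  have "s\<^sup>2 * ((H (p + a *\<^sub>R u + b *\<^sub>R v) *v u) \<bullet> v)
      = s\<^sup>2 * ((H (p + b' *\<^sub>R u + a' *\<^sub>R v) *v v) \<bullet> u)"
    using eq1 eq2 by (simp add: algebra_simps)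
  then have "(H (p + a *\<^sub>R u + b *\<^sub>R v) *v u) \<bullet> v = (H (p + b' *\<^sub>R u + a' *\<^sub>R v) *v v) \<bullet> u"
    using s(1) by simp
  then show ?thesis
    by (rule that[OF near[OF ab] near[OF ab'(2,1)] box(1)[OF ab] box(1)[OF ab'(2,1)]])
qed

lemma hessian_symmetric_interior:
  fixes k :: "real^'m::finite \<Rightarrow> real" and g :: "real^'m \<Rightarrow> real^'m"
    and H :: "real^'m \<Rightarrow> real^'m^'m"
  assumes grad: "\<And>q. q \<in> S \<Longrightarrow> (k has_derivative (\<lambda>h. g q \<bullet> h)) (at q within S)"
    and hess: "\<And>q. q \<in> S \<Longrightarrow> (g has_derivative (\<lambda>h. H q *v h)) (at q within S)"
    and cont: "continuous_on S H" and p: "p \<in> interior S"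
  shows "(H p *v u) \<bullet> v = (H p *v v) \<bullet> u"
proof -
  obtain r where r: "r > 0" "ball p r \<subseteq> S"
    using p mem_interior by blast
  define C where "C = norm u + norm v"
  define s :: "nat \<Rightarrow> real" where "s n = r / (C + 1) * inverse (real (Suc n))" for n
  have C: "0 \<le> C"
    by (simp add: C_def)
  have s: "0 < s n" "s n * C < r" for n
  proof -
    show "0 < s n"
      using r C by (simp add: s_def)
    then have "s n * C < s n * (C + 1)"
      by simp
    also have "\<dots> = r * inverse (real (Suc n))"
      using C by (simp add: s_def)
    also have "\<dots> \<le> r"
      using r by (simp add: field_simps)
    finally show "s n * C < r" .
  qed
  have "\<exists>x y. dist x p \<le> s n * C \<and> dist y p \<le> s n * C \<and> x \<in> S \<and> y \<in> S
      \<and> (H x *v u) \<bullet> v = (H y *v v) \<bullet> u" for n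
  proof (rule mixed_partials_agree_nearby[OF grad hess r(2) s(1), where u=u and v=v])
    show "s n * (norm u + norm v) < r"
      using s(2) by (simp add: C_def)
  qed (auto simp: C_def)
  then obtain x y where xy: "\<And>n. dist (x n) p \<le> s n * C" "\<And>n. dist (y n) p \<le> s n * C"
    "\<And>n. x n \<in> S" "\<And>n. y n \<in> S" "\<And>n. (H (x n) *v u) \<bullet> v = (H (y n) *v v) \<bullet> u"
    by metis
  have lim: "(\<lambda>n. s n * C) \<longlonglongrightarrow> 0"
    unfolding s_def
    by (intro tendsto_mult_left_zero tendsto_mult_right_zero LIMSEQ_inverse_real_of_nat)
  have "x \<longlonglongrightarrow> p" "y \<longlonglongrightarrow> p"
    by (rule tendsto_dist_iff[THEN iffD2], rule Lim_null_comparison[OF always_eventually lim],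
        simp add: xy)+
  moreover have "p \<in> S"
    using p interior_subset by blast
  moreover have cont_form: "continuous_on S (\<lambda>q. (H q *v w) \<bullet> z)" for w z
  proof -
    have "(\<lambda>q. (H q *v w) \<bullet> z) = (\<lambda>q. \<Sum>i\<in>UNIV. (\<Sum>j\<in>UNIV. H q $ i $ j * w $ j) * z $ i)"
      by (simp add: inner_vec_def matrix_vector_mult_def)
    then show ?thesis
      by (simp only:) (intro continuous_intros cont)
  qed
  ultimately have "(\<lambda>n. (H (x n) *v u) \<bullet> v) \<longlonglongrightarrow> (H p *v u) \<bullet> v"
    and "(\<lambda>n. (H (y n) *v v) \<bullet> u) \<longlonglongrightarrow> (H p *v v) \<bullet> u"
    using xy(3,4) by (auto intro!: continuous_on_tendsto_compose[OF cont_form])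
  then show ?thesis
    using xy(5) LIMSEQ_unique by simp
qed

lemma symmetric_on_closure_interior:
  fixes H :: "'a::topological_space \<Rightarrow> real^'m::finite^'m"
  assumes cont: "continuous_on S H"
    and sym: "\<And>q. q \<in> interior S \<Longrightarrow> transpose (H q) = H q"
    and p: "p \<in> S" "p \<in> closure (interior S)"
  shows "transpose (H p) = H p"
proof -
  have "H p $ i $ j = H p $ j $ i" for i j
  proof -
    have "closedin (top_of_set S) {q \<in> S. H q $ i $ j - H q $ j $ i = 0}"
      by (intro continuous_closedin_preimage_constant continuous_intros cont)
    then obtain T where T: "closed T" "{q \<in> S. H q $ i $ j - H q $ j $ i = 0} = S \<inter> T"
      unfolding closedin_closed by blast
    have "interior S \<subseteq> T"
      using T(2) sym interior_subset by (fastforce simp: transpose_def vec_eq_iff)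
    then have "p \<in> T"
      using T(1) p(2) closure_minimal by blast
    then show ?thesis
      using T(2) p(1) by auto
  qed
  then show ?thesis
    by (simp add: transpose_def vec_eq_iff)
qed

lemma open_cyl_interior:
  assumes "open D"
  shows "open {q. time_coord q \<in> {0<..<1} \<and> space_part q \<in> (D :: (real^'n::finite) set)}"
proof -
  have "continuous_on UNIV (time_coord :: real^'n option \<Rightarrow> real)"
    unfolding time_coord_def by (intro continuous_intros)
  moreover have "continuous_on UNIV (space_part :: real^'n option \<Rightarrow> real^'n)"
    unfolding space_part_def by (intro continuous_intros)
  moreover have "{q. time_coord q \<in> {0<..<1} \<and> space_part q \<in> D}
      = time_coord -` {0<..<1} \<inter> space_part -` D"
    by auto
  ultimately show ?thesis
    using assms by (simp add: open_Int open_vimage)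
qed

lemma cyl_subset_closure_interior:
  assumes "open D"
  shows "cyl D \<subseteq> closure (interior (cyl D))"
proof
  fix p assume p: "p \<in> cyl D"
  define U where "U = {q. time_coord q \<in> {0<..<1} \<and> space_part q \<in> D}"
  have "U \<subseteq> interior (cyl D)"
    using open_cyl_interior[OF assms] by (intro interior_maximal) (auto simp: U_def cyl_def)
  moreover have "p \<in> closure U"
    unfolding closure_approachable
  proof (intro allI impI)
    fix e :: real assume e: "e > 0"
    define \<epsilon> where "\<epsilon> = min 1 e"
    define q where "q = p + (\<epsilon> * (1/2 - time_coord p)) *\<^sub>R axis None 1"
    have t: "0 \<le> time_coord p" "time_coord p \<le> 1"
      using p by (auto simp: cyl_def)
    have \<epsilon>: "0 < \<epsilon>" "\<epsilon> \<le> 1" "\<epsilon> \<le> e"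
      using e by (auto simp: \<epsilon>_def)
    have "time_coord q = (1 - \<epsilon>) * time_coord p + \<epsilon> / 2"
      by (simp add: q_def time_coord_def algebra_simps)
    moreover have "(1 - \<epsilon>) * time_coord p \<le> 1 - \<epsilon>" "0 \<le> (1 - \<epsilon>) * time_coord p"
      using t \<epsilon> by (simp_all add: mult_left_le)
    ultimately have "time_coord q \<in> {0<..<1}"
      using \<epsilon> by auto
    moreover have "space_part q = space_part p"
      by (simp add: q_def space_part_def vec_eq_iff axis_def)
    ultimately have "q \<in> U"
      using p by (simp add: U_def cyl_def)
    have "\<bar>1/2 - time_coord p\<bar> < 1"
      using t by auto
    then have "\<epsilon> * \<bar>1/2 - time_coord p\<bar> < \<epsilon>"
      using mult_strict_left_mono[of _ 1 \<epsilon>] \<epsilon>(1) by simp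
    moreover have "dist q p = \<epsilon> * \<bar>1/2 - time_coord p\<bar>"
      using \<epsilon>(1) by (simp add: q_def dist_norm abs_mult)
    ultimately have "dist q p < e"
      using \<epsilon>(3) by linarith
    with \<open>q \<in> U\<close> show "\<exists>y\<in>U. dist y p < e"
      by blast
  qed
  ultimately show "p \<in> closure (interior (cyl D))"
    using closure_mono by blast
qed

lemma hessian_symmetric:
  fixes k :: "real^'m::finite \<Rightarrow> real" and g :: "real^'m \<Rightarrow> real^'m"
    and H :: "real^'m \<Rightarrow> real^'m^'m"
  assumes grad: "\<And>q. q \<in> S \<Longrightarrow> (k has_derivative (\<lambda>h. g q \<bullet> h)) (at q within S)"
    and hess: "\<And>q. q \<in> S \<Longrightarrow> (g has_derivative (\<lambda>h. H q *v h)) (at q within S)"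
    and cont: "continuous_on S H" and p: "p \<in> S" "p \<in> closure (interior S)"
  shows "transpose (H p) = H p"
proof (rule symmetric_on_closure_interior[OF cont _ p])
  fix q assume q: "q \<in> interior S"
  have "H q $ i $ j = H q $ j $ i" for i j
    using hessian_symmetric_interior[OF grad hess cont q, of "axis j 1" "axis i 1"]
    by (simp add: matrix_vector_mult_basis column_def inner_axis)
  then show "transpose (H q) = H q"
    by (simp add: vec_eq_iff transpose_def)
qed

section \<open>Cofactors and determinants\<close>

lemma cof_eq_det_row: "cof A $ i $ j = det (\<chi> r. if r = i then axis j 1 else row r A)"
  unfolding cof_def
  by (simp add: axis_def row_def vec_eq_iff cong: if_cong)
    (rule arg_cong[where f=det], simp add: vec_eq_iff)

lemma matrix_mul_transpose_cof:
  fixes A :: "'a::comm_ring_1^'n::finite^'n"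
  shows "A ** transpose (cof A) = mat (det A)"
proof -
  have "(\<Sum>j\<in>UNIV. A $ k $ j * cof A $ i $ j) = (if k = i then det A else 0)" for k i
  proof -
    have "(\<Sum>j\<in>UNIV. A $ k $ j * cof A $ i $ j)
        = (\<Sum>j\<in>UNIV. det (\<chi> r. if r = i then A $ k $ j *s axis j 1 else row r A))"
      unfolding cof_eq_det_row by (intro sum.cong refl det_row_mul[symmetric])
    also have "\<dots> = det (\<chi> r. if r = i then (\<Sum>j\<in>UNIV. A $ k $ j *s axis j 1) else row r A)"
      by (rule det_linear_row_sum[symmetric]) simp
    also have "(\<Sum>j\<in>UNIV. A $ k $ j *s axis j 1) = row k A"
      by (simp add: vec_eq_iff axis_def row_def if_distrib cong: if_cong)
    also have "det (\<chi> r. if r = i then row k A else row r A) = (if k = i then det A else 0)"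
    proof (cases "k = i")
      case True
      then have "(\<chi> r. if r = i then row k A else row r A) = A"
        by (simp add: vec_eq_iff row_def)
      then show ?thesis
        using True by simp
    next
      case False
      then show ?thesis
        by (simp add: det_identical_rows[OF False] row_def vec_eq_iff)
    qed
    finally show ?thesis .
  qed
  then show ?thesis
    by (simp add: vec_eq_iff matrix_matrix_mult_def transpose_def mat_def)
qed

lemma transpose_cof_eq_if_symmetric:
  fixes A :: "'a::idom^'n::finite^'n"
  assumes sym: "transpose A = A" and det: "det A \<noteq> 0"
  shows "transpose (cof A) = cof A"
proof -
  define B where "B = transpose (cof A)"
  have AB: "A ** B = mat (det A)"
    by (simp add: B_def matrix_mul_transpose_cof)
  then have BA: "transpose B ** A = mat (det A)"
    using matrix_transpose_mul[of A B] sym by simp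
  have "transpose B ** (A ** B) = (transpose B ** A) ** B"
    by (rule matrix_mul_assoc)
  then have "transpose B ** mat (det A) = mat (det A) ** B"
    by (simp add: AB BA)
  then have "det A * transpose B $ i $ j = det A * B $ i $ j" for i j
    by (auto simp: vec_eq_iff matrix_matrix_mult_def mat_def if_distrib if_distribR mult.commute
        sum.delta'[OF finite] cong: if_cong)
  then have "transpose B = B"
    using det by (simp add: vec_eq_iff)
  then show ?thesis
    by (metis B_def transpose_transpose)
qed

lemma rank_plus_dim_null_space:
  fixes M :: "real^'n::finite^'m::finite"
  shows "rank M + dim (null_space M) = CARD('n)"
proof -
  let ?R = "range (\<lambda>x. transpose M *v x)"
  have "subspace ?R"
    by (rule linear_subspace_image[OF matrix_vector_mul_linear subspace_UNIV])
  then have "dim {y \<in> UNIV. \<forall>x \<in> ?R. orthogonal x y} + dim ?R = dim (UNIV :: (real^'n) set)"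
    by (rule dim_subspace_orthogonal_to_vectors[OF _ subspace_UNIV subset_UNIV])
  moreover have "{y \<in> UNIV. \<forall>x \<in> ?R. orthogonal x y} = null_space M"
  proof -
    have "(\<forall>x. x \<bullet> (M *v y) = 0) \<longleftrightarrow> M *v y = 0" for y
      by (metis inner_eq_zero_iff inner_zero_right)
    then show ?thesis
      by (simp add: null_space_def orthogonal_def dot_lmul_matrix)
  qed
  moreover have "rank M = dim ?R"
    by (metis rank_dim_range rank_transpose)
  ultimately show ?thesis
    by (simp add: add.commute)
qed

lemma map_option_eq_map_permutation: "map_option \<sigma> = map_permutation UNIV Some \<sigma>"
proof
  show "map_option \<sigma> x = map_permutation UNIV Some \<sigma> x" for x
    by (cases x) (auto simp: map_permutation_def restrict_id_def)
qed

lemma permutes_map_option: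
  fixes \<sigma> :: "'n::finite \<Rightarrow> 'n"
  assumes "\<sigma> permutes UNIV"
  shows "map_option \<sigma> permutes UNIV" and "sign (map_option \<sigma>) = sign \<sigma>"
proof -
  have "map_permutation UNIV Some \<sigma> permutes range Some"
    by (rule map_permutation_permutes[OF _ assms]) (simp add: bij_betw_def)
  then show "map_option \<sigma> permutes UNIV"
    by (simp add: map_option_eq_map_permutation permutes_subset)
  show "sign (map_option \<sigma>) = sign \<sigma>"
    unfolding map_option_eq_map_permutation by (rule sign_map_permutation) (use assms in auto)
qed

lemma permutes_fixing_None:
  "{p. p permutes (UNIV :: 'n::finite option set) \<and> p None = None}
     = map_option ` {\<sigma>. \<sigma> permutes (UNIV :: 'n set)}"
proof
  show "map_option ` {\<sigma>. \<sigma> permutes UNIV} \<subseteq> {p. p permutes (UNIV :: 'n option set) \<and> p None = None}"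
    using permutes_map_option by auto
next
  show "{p. p permutes UNIV \<and> p None = None} \<subseteq> map_option ` {\<sigma>. \<sigma> permutes (UNIV :: 'n set)}"
  proof safe
    fix p :: "'n option \<Rightarrow> 'n option"
    assume p: "p permutes UNIV" "p None = None"
    define \<sigma> where "\<sigma> i = the (p (Some i))" for i
    have Some: "p (Some i) = Some (\<sigma> i)" for i
      using p permutes_inj[OF p(1)] unfolding \<sigma>_def
      by (metis injD option.collapse option.distinct(1))
    have "p = map_option \<sigma>"
    proof
      show "p x = map_option \<sigma> x" for x
        by (cases x) (auto simp: p(2) Some)
    qed
    moreover have "\<sigma> permutes UNIV"
    proof (rule bij_imp_permutes)
      have "inj \<sigma>"
        using permutes_inj[OF p(1)] by (metis Some injD injI option.inject)
      moreover have "j \<in> range \<sigma>" for j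
      proof -
        obtain x where x: "p x = Some j"
          using permutes_surj[OF p(1)] by (metis surjD)
        then obtain i where "x = Some i"
          using p(2) by (cases x) auto
        then show ?thesis
          using x Some by (metis option.inject rangeI)
      qed
      ultimately show "bij_betw \<sigma> UNIV UNIV"
        by (auto simp: bij_betw_def)
    qed auto
    ultimately show "p \<in> map_option ` {\<sigma>. \<sigma> permutes UNIV}"
      by auto
  qed
qed

lemma sum_permutes_fixing_None:
  "(\<Sum>p | p permutes (UNIV :: 'n::finite option set) \<and> p None = None. f p)
     = (\<Sum>\<sigma> | \<sigma> permutes (UNIV :: 'n set). f (map_option \<sigma>))"
  unfolding permutes_fixing_None
proof (rule trans[OF sum.reindex], rule inj_onI)
  fix \<sigma> \<tau> :: "'n \<Rightarrow> 'n"
  assume "map_option \<sigma> = map_option \<tau>"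
  then have "map_option \<sigma> (Some i) = map_option \<tau> (Some i)" for i
    by simp
  then show "\<sigma> = \<tau>"
    by auto
qed simp

lemma det_unit_row_None:
  fixes X :: "'a::comm_ring_1^('n::finite option)^('n option)"
  assumes X0: "\<And>c. X $ None $ c = (if c = None then 1 else 0)"
  shows "det X = det (\<chi> i j. X $ Some i $ Some j :: 'a^'n^'n)"
proof -
  let ?f = "\<lambda>p. of_int (sign p) * (\<Prod>i\<in>UNIV. X $ i $ p i)"
  have "det X = sum ?f {p. p permutes (UNIV :: 'n option set)}"
    by (simp add: det_def)
  also have "\<dots> = sum ?f {p. p permutes (UNIV :: 'n option set) \<and> p None = None}"
  proof (rule sum.mono_neutral_right)
    show "\<forall>p \<in> {p. p permutes UNIV} - {p. p permutes UNIV \<and> p None = None}. ?f p = 0"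
    proof
      fix p :: "'n option \<Rightarrow> 'n option"
      assume "p \<in> {p. p permutes UNIV} - {p. p permutes UNIV \<and> p None = None}"
      then have "X $ None $ p None = 0"
        using X0 by simp
      then have "(\<Prod>i\<in>UNIV. X $ i $ p i) = 0"
        by (intro prod_zero) auto
      then show "?f p = 0"
        by simp
    qed
  qed (auto simp: finite_permutations)
  also have "\<dots> = (\<Sum>\<sigma> | \<sigma> permutes (UNIV :: 'n set). ?f (map_option \<sigma>))"
    by (rule sum_permutes_fixing_None)
  also have "\<dots> = (\<Sum>\<sigma> | \<sigma> permutes (UNIV :: 'n set).
      of_int (sign \<sigma>) * (\<Prod>i\<in>UNIV. X $ Some i $ Some (\<sigma> i)))"
  proof (rule sum.cong[OF refl])
    fix \<sigma> :: "'n \<Rightarrow> 'n" assume "\<sigma> \<in> {\<sigma>. \<sigma> permutes UNIV}"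
    then have "sign (map_option \<sigma>) = sign \<sigma>"
      using permutes_map_option by auto
    moreover have "(\<Prod>i\<in>UNIV. X $ i $ map_option \<sigma> i) = (\<Prod>i\<in>UNIV. X $ Some i $ Some (\<sigma> i))"
      using X0 by (simp add: UNIV_option_conv prod.reindex)
    ultimately show "?f (map_option \<sigma>) = of_int (sign \<sigma>) * (\<Prod>i\<in>UNIV. X $ Some i $ Some (\<sigma> i))"
      by simp
  qed
  also have "\<dots> = det (\<chi> i j. X $ Some i $ Some j :: 'a^'n^'n)"
    by (simp add: det_def)
  finally show ?thesis .
qed

section \<open>The linearized operator at a point\<close>

definition cvec :: "real^'n \<Rightarrow> complex^'n" where
  "cvec v = (\<chi> i. complex_of_real (v $ i))"

lemma sum_option_None_zero:
  "(\<Sum>s\<in>UNIV. if s = None then 0 else f s) = (\<Sum>i\<in>(UNIV :: 'n::finite set). f (Some i))"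
  by (simp add: UNIV_option_conv sum.reindex)

lemma In_plus_i_entry:
  "(cmat In_mat + cscale \<i> (cmat A)) $ r $ s
     = (if r = s \<and> r \<noteq> None then 1 else 0) + \<i> * complex_of_real (A $ r $ s)"
  by (cases r; cases s) (simp_all add: cmat_def cscale_def In_mat_def)

lemma Im_symmetric_form_eq_zero:
  fixes A :: "real^'n::finite^'n" and w :: "complex^'n"
  assumes sym: "transpose A = A"
  shows "Im (\<Sum>s\<in>UNIV. \<Sum>j\<in>UNIV. complex_of_real (A $ s $ j) * w $ j * cnj (w $ s)) = 0"
    (is "Im ?T = 0")
proof -
  have "cnj ?T = (\<Sum>j\<in>UNIV. \<Sum>s\<in>UNIV. complex_of_real (A $ s $ j) * cnj (w $ j) * w $ s)"
    by simp (rule sum.swap)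
  also have "\<dots> = ?T"
  proof (intro sum.cong refl)
    fix j s
    have "A $ s $ j = A $ j $ s"
      using arg_cong[OF sym, of "\<lambda>B. B $ s $ j"] by (simp add: transpose_def)
    then show "complex_of_real (A $ s $ j) * cnj (w $ j) * w $ s
        = complex_of_real (A $ j $ s) * w $ s * cnj (w $ j)"
      by (simp add: mult_ac)
  qed
  finally have "?T \<in> \<real>"
    unfolding Reals_cnj_iff .
  then show ?thesis
    unfolding complex_is_Real_iff .
qed

lemma Re_form_In_plus_i_symmetric:
  fixes A :: "real^('n::finite option)^('n option)" and w :: "complex^('n option)"
  assumes sym: "transpose A = A"
  shows "Re (\<Sum>s\<in>UNIV. ((cmat In_mat + cscale \<i> (cmat A)) *v w) $ s * cnj (w $ s))
         = (\<Sum>i\<in>UNIV. (cmod (w $ Some i))\<^sup>2)"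
proof -
  define T where "T = (\<Sum>s\<in>UNIV. \<Sum>j\<in>UNIV. complex_of_real (A $ s $ j) * w $ j * cnj (w $ s))"
  have entry: "(cmat In_mat + cscale \<i> (cmat A)) $ s $ j * w $ j * cnj (w $ s)
      = (if s = j \<and> s \<noteq> None then w $ s * cnj (w $ s) else 0)
        + \<i> * (complex_of_real (A $ s $ j) * w $ j * cnj (w $ s))" for s j
    unfolding In_plus_i_entry by (simp add: ring_distribs mult_ac del: not_None_eq)
  have diag: "(\<Sum>j\<in>UNIV. if s = j \<and> s \<noteq> None then w $ s * cnj (w $ s) else 0)
      = (if s = None then 0 else w $ s * cnj (w $ s))" for s
    by (cases "s = None") auto
  have "(\<Sum>s\<in>UNIV. ((cmat In_mat + cscale \<i> (cmat A)) *v w) $ s * cnj (w $ s))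
      = (\<Sum>s\<in>UNIV. \<Sum>j\<in>UNIV. (cmat In_mat + cscale \<i> (cmat A)) $ s $ j * w $ j * cnj (w $ s))"
    by (simp add: matrix_vector_mult_def sum_distrib_right)
  also have "\<dots> = (\<Sum>s\<in>UNIV. if s = None then 0 else w $ s * cnj (w $ s)) + \<i> * T"
    unfolding entry sum.distrib diag T_def sum_distrib_left by simp
  finally have "Re (\<Sum>s\<in>UNIV. ((cmat In_mat + cscale \<i> (cmat A)) *v w) $ s * cnj (w $ s))
      = (\<Sum>s\<in>UNIV. Re (if s = None then 0 else w $ s * cnj (w $ s)))"
    using Im_symmetric_form_eq_zero[OF sym, of w] by (simp add: T_def Re_sum)
  also have "\<dots> = (\<Sum>s\<in>UNIV. if s = None then 0 else (cmod (w $ s))\<^sup>2)"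
    by (intro sum.cong refl) (simp add: complex_mult_cnj cmod_power2)
  finally show ?thesis
    by (simp add: sum_option_None_zero)
qed

locale slag_hessian =
  fixes A :: "real^('n::finite option)^('n option)" and \<theta> :: real
  assumes symmetric: "transpose A = A"
    and Im_det: "Im (exp (- \<i> * complex_of_real \<theta>) * det (cmat In_mat + cscale \<i> (cmat A))) = 0"
    and Re_det_space:
      "Re (exp (- \<i> * complex_of_real \<theta>) * det (mat 1 + cscale \<i> (cmat (space_block A)))) > 0"
begin

definition N :: "complex^('n option)^('n option)" where
  "N = cmat In_mat + cscale \<i> (cmat A)"

definition \<omega> :: complex where
  "\<omega> = exp (- \<i> * complex_of_real \<theta>)"

definition c :: real where
  "c = Re (\<omega> * det N)"

definition P :: "complex^('n option)^('n option)" where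
  "P = cscale \<omega> (transpose (cof N))"

definition u :: "real^('n option) \<Rightarrow> complex^('n option)" where
  "u v = P *v cvec v"

abbreviation M :: "real^('n option)^('n option)" where
  "M \<equiv> lin_mat \<theta> A"

lemma N_entry: "N $ r $ s = (if r = s \<and> r \<noteq> None then 1 else 0) + \<i> * complex_of_real (A $ r $ s)"
  by (simp add: N_def In_plus_i_entry del: vector_add_component)

lemma A_sym: "A $ i $ j = A $ j $ i"
  using arg_cong[OF symmetric, of "\<lambda>B. B $ j $ i"] by (simp add: transpose_def)

lemma \<omega>_det_N: "\<omega> * det N = complex_of_real c"
  using Im_det by (simp add: c_def \<omega>_def N_def complex_eq_iff)

lemma M_entry: "M $ r $ s = Re (P $ s $ r)"
  by (simp add: lin_mat_def Re_mat_def cscale_def P_def \<omega>_def N_def transpose_def)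

lemma N_mul_P: "N ** P = mat (complex_of_real c)"
proof -
  have "N ** P = cscale \<omega> (N ** transpose (cof N))"
    by (simp add: P_def cscale_def matrix_matrix_mult_def vec_eq_iff sum_distrib_left mult_ac)
  then show ?thesis
    by (simp add: matrix_mul_transpose_cof \<omega>_det_N[symmetric] cscale_def mat_def vec_eq_iff)
qed

lemma N_mul_u: "(N *v u v) $ k = complex_of_real (c * v $ k)"
proof -
  have "N *v u v = mat (complex_of_real c) *v cvec v"
    unfolding u_def matrix_vector_mul_assoc N_mul_P ..
  then show ?thesis
    by (simp add: cvec_def matrix_vector_mult_def mat_def if_distrib if_distribR
        cong del: if_weak_cong)
qed

lemma quadratic_form_M: "v \<bullet> (M *v v) = Re (\<Sum>s\<in>UNIV. complex_of_real (v $ s) * u v $ s)"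
proof -
  have "v \<bullet> (M *v v) = (\<Sum>r\<in>UNIV. \<Sum>s\<in>UNIV. v $ r * Re (P $ s $ r) * v $ s)"
    by (simp add: inner_vec_def matrix_vector_mult_def M_entry sum_distrib_left mult_ac)
  also have "\<dots> = (\<Sum>s\<in>UNIV. \<Sum>r\<in>UNIV. v $ r * Re (P $ s $ r) * v $ s)"
    by (rule sum.swap)
  also have "\<dots> = Re (\<Sum>s\<in>UNIV. complex_of_real (v $ s) * u v $ s)"
    by (simp add: u_def cvec_def matrix_vector_mult_def Re_sum sum_distrib_left mult_ac)
  finally show ?thesis .
qed

lemma c_mul_quadratic_form: "c * (v \<bullet> (M *v v)) = (\<Sum>i\<in>UNIV. (cmod (u v $ Some i))\<^sup>2)"
proof -
  have "c * (v \<bullet> (M *v v)) = Re (\<Sum>s\<in>UNIV. complex_of_real (c * v $ s) * cnj (u v $ s))"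
    by (simp add: quadratic_form_M sum_distrib_left mult.assoc)
  also have "\<dots> = Re (\<Sum>s\<in>UNIV. (N *v u v) $ s * cnj (u v $ s))"
    by (simp add: N_mul_u)
  also have "\<dots> = (\<Sum>i\<in>UNIV. (cmod (u v $ Some i))\<^sup>2)"
    unfolding N_def by (rule Re_form_In_plus_i_symmetric[OF symmetric])
  finally show ?thesis .
qed

lemma M_None_None_pos: "M $ None $ None > 0"
proof -
  define X :: "complex^('n option)^('n option)"
    where "X = (\<chi> r c. if r = None then (if c = None then 1 else 0) else N $ r $ c)"
  have "cof N $ None $ None = det X"
    by (simp add: cof_def X_def)
  also have "\<dots> = det (\<chi> i j. X $ Some i $ Some j :: complex^'n^'n)"
    by (rule det_unit_row_None) (simp add: X_def)
  also have "(\<chi> i j. X $ Some i $ Some j :: complex^'n^'n)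
      = mat 1 + cscale \<i> (cmat (space_block A))"
    by (simp add: vec_eq_iff X_def N_entry mat_def cscale_def cmat_def space_block_def)
  finally show ?thesis
    using Re_det_space by (simp add: M_entry P_def transpose_def cscale_def \<omega>_def)
qed

lemma N_mul_supported_on_None:
  assumes "\<And>i. w $ Some i = 0"
  shows "(N *v w) $ k = \<i> * complex_of_real (A $ None $ k) * w $ None"
proof -
  have "(N *v w) $ k = (\<Sum>j\<in>UNIV. if j = None then N $ k $ j * w $ j else 0)"
    unfolding matrix_vector_mult_def vec_lambda_beta
    by (intro sum.cong refl) (use assms in \<open>auto simp: not_None_eq\<close>)
  then show ?thesis
    by (simp add: N_entry A_sym del: not_None_eq)
qed

lemma u_Some_eq_zero:
  assumes "c * (v \<bullet> (M *v v)) = 0"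
  shows "u v $ Some i = 0"
proof -
  have "(\<Sum>i\<in>UNIV. (cmod (u v $ Some i))\<^sup>2) = 0"
    using assms c_mul_quadratic_form by simp
  then show ?thesis
    by (simp add: sum_nonneg_eq_0_iff)
qed

lemma c_pos:
  assumes "row None A \<noteq> 0"
  shows "c > 0"
proof -
  let ?e = "axis None 1 :: real^('n option)"
  have form: "?e \<bullet> (M *v ?e) = M $ None $ None"
    by (simp add: matrix_vector_mult_basis inner_axis' column_def)
  have "0 \<le> c * M $ None $ None"
    using c_mul_quadratic_form[of ?e] by (simp add: form sum_nonneg)
  then have "0 \<le> c"
    using M_None_None_pos by (simp add: zero_le_mult_iff)
  moreover have "c \<noteq> 0"
  proof
    assume c0: "c = 0"
    have "u ?e $ None = (\<Sum>j\<in>UNIV. if j = None then P $ None $ j else 0)"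
      unfolding u_def matrix_vector_mult_def vec_lambda_beta
      by (intro sum.cong refl) (simp add: cvec_def axis_def)
    then have "u ?e $ None = P $ None $ None"
      by simp
    then have "u ?e $ None \<noteq> 0"
      using M_None_None_pos by (auto simp: M_entry)
    moreover have "\<i> * complex_of_real (A $ None $ k) * u ?e $ None = 0" for k
      using N_mul_u[of ?e k] N_mul_supported_on_None[OF u_Some_eq_zero] c0 by simp
    ultimately have "row None A = 0"
      by (simp add: row_def vec_eq_iff)
    with assms show False ..
  qed
  ultimately show ?thesis
    by simp
qed

lemma transpose_M:
  assumes "c \<noteq> 0"
  shows "transpose M = M"
proof -
  have "transpose N = N"
    by (simp add: vec_eq_iff transpose_def N_entry A_sym del: not_None_eq)
  moreover have "det N \<noteq> 0"
    using \<omega>_det_N assms by (metis mult_zero_right of_real_eq_0_iff)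
  ultimately have cof_sym: "transpose (cof N) = cof N"
    by (rule transpose_cof_eq_if_symmetric)
  have "cof N $ s $ r = cof N $ r $ s" for r s
  proof -
    have "cof N $ s $ r = transpose (cof N) $ r $ s"
      by (simp add: transpose_def)
    then show ?thesis
      by (simp only: cof_sym)
  qed
  then have "P $ r $ s = P $ s $ r" for r s
    by (simp add: P_def cscale_def transpose_def)
  then show ?thesis
    by (simp add: vec_eq_iff transpose_def M_entry)
qed

lemma psd_M:
  assumes "c > 0"
  shows "psd M"
proof -
  have "0 \<le> v \<bullet> (M *v v)" for v
  proof -
    have "0 \<le> c * (v \<bullet> (M *v v))"
      by (simp add: c_mul_quadratic_form sum_nonneg)
    then show ?thesis
      using assms by (simp add: zero_le_mult_iff)
  qed
  then show ?thesis
    using transpose_M assms by (simp add: psd_def)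
qed

lemma M_mul_row_None: "M *v row None A = 0"
proof -
  have "(M *v row None A) $ r = 0" for r
  proof -
    define X where "X = (\<Sum>s\<in>UNIV. complex_of_real (A $ None $ s) * P $ s $ r)"
    have "(M *v row None A) $ r = Re X"
      by (simp add: X_def matrix_vector_mult_def M_entry row_def mult.commute)
    moreover have "\<i> * X = (N ** P) $ None $ r"
      by (simp add: X_def matrix_matrix_mult_def N_entry sum_distrib_left mult.assoc)
    then have "Im (\<i> * X) = 0"
      by (simp add: N_mul_P mat_def)
    ultimately show ?thesis
      by simp
  qed
  then show ?thesis
    by (simp add: vec_eq_iff)
qed

lemma null_space_M:
  assumes "c > 0"
  shows "null_space M = span {row None A}"
proof
  show "null_space M \<subseteq> span {row None A}"
  proof
    fix v assume "v \<in> null_space M"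
    then have Some0: "u v $ Some i = 0" for i
      by (intro u_Some_eq_zero) (simp add: null_space_def)
    have "complex_of_real (c * v $ k) = complex_of_real (A $ None $ k) * (\<i> * u v $ None)" for k
      using N_mul_u[of v k] N_mul_supported_on_None[OF Some0] by (simp add: mult_ac)
    then have "c * v $ k = - Im (u v $ None) * A $ None $ k" for k
      by (simp add: complex_eq_iff)
    then have "v = (- Im (u v $ None) / c) *\<^sub>R row None A"
      using assms by (simp add: vec_eq_iff row_def field_simps)
    then show "v \<in> span {row None A}"
      by (metis span_base span_mul singletonI)
  qed
  show "span {row None A} \<subseteq> null_space M"
    by (auto simp: span_singleton null_space_def matrix_vector_mult_scaleR M_mul_row_None)
qed

lemma M_noncritical:
  assumes "row None A \<noteq> 0"
  shows "psd M \<and> rank M = CARD('n) \<and> null_space M = span {row None A}"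
proof -
  have c: "c > 0"
    using c_pos[OF assms] .
  then have "dim (null_space M) = 1"
    using assms by (simp add: null_space_M dim_insert)
  then have "rank M = CARD('n)"
    using rank_plus_dim_null_space[of M] by simp
  then show ?thesis
    using psd_M[OF c] null_space_M[OF c] by simp
qed

lemma cof_N_eq_zero:
  assumes "row None A = 0" and "i \<noteq> None \<or> j \<noteq> None"
  shows "cof N $ i $ j = 0"
proof -
  have A0: "A $ None $ k = 0" "A $ k $ None = 0" for k
    using assms(1) A_sym by (auto simp: row_def vec_eq_iff)
  let ?X = "(\<chi> r c. if r = i then (if c = j then 1 else 0) else N $ r $ c)
    :: complex^('n option)^('n option)"
  have "det ?X = 0"
  proof (cases "i = None")
    case False
    then have "row None ?X = 0"
      by (simp add: row_def vec_eq_iff N_entry A0 del: not_None_eq)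
    then show ?thesis
      by (rule det_zero_row(2))
  next
    case True
    then have "column None ?X = 0"
      using assms(2) by (simp add: column_def vec_eq_iff N_entry A0 del: not_None_eq)
    then show ?thesis
      by (rule det_zero_column(2))
  qed
  then show ?thesis
    by (simp add: cof_def)
qed

lemma M_critical:
  assumes "row None A = 0"
  shows "psd M \<and> rank M = 1"
proof -
  define m where "m = M $ None $ None"
  have M_diag: "M $ r $ s = (if r = None \<and> s = None then m else 0)" for r s
    using cof_N_eq_zero[OF assms, of r s]
    by (auto simp: m_def M_entry P_def cscale_def transpose_def simp del: not_None_eq)
  have "(M *v v) $ r
      = (\<Sum>s\<in>(UNIV :: 'n option set). if s = None then (if r = None then m * v $ None else 0) else 0)"
    for v r
    unfolding matrix_vector_mult_def vec_lambda_beta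
    by (intro sum.cong refl) (auto simp: M_diag simp del: not_None_eq)
  then have Mv: "M *v v = (m * v $ None) *\<^sub>R axis None 1" for v
    by (simp add: vec_eq_iff axis_def)
  have "transpose M = M"
    by (simp add: vec_eq_iff transpose_def M_diag conj_commute)
  then have "psd M"
    using M_None_None_pos by (simp add: psd_def Mv inner_axis mult.assoc m_def)
  moreover have "null_space M = {v. axis None 1 \<bullet> v = 0}"
    using M_None_None_pos by (auto simp: null_space_def Mv inner_axis' axis_eq_0_iff m_def)
  then have "dim (null_space M) = CARD('n)"
    by (simp add: dim_hyperplane axis_eq_0_iff)
  ultimately show ?thesis
    using rank_plus_dim_null_space[of M] by simp
qed

end

theorem theorem4p1:
  fixes D :: "(real^'n::finite) set" and \<theta> :: real
    and k :: "real^('n option) \<Rightarrow> real"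
    and g :: "real^('n option) \<Rightarrow> real^('n option)"
    and H :: "real^('n option) \<Rightarrow> real^('n option)^('n option)"
  assumes D_domain: "open D" "connected D" "D \<noteq> {}"
    and theta: "-pi < \<theta>" "\<theta> \<le> pi"
    and grad: "\<And>p. p \<in> cyl D \<Longrightarrow> (k has_derivative (\<lambda>h. g p \<bullet> h)) (at p within cyl D)"
    and hess: "\<And>p. p \<in> cyl D \<Longrightarrow> (g has_derivative (\<lambda>h. H p *v h)) (at p within cyl D)"
    and C2: "continuous_on (cyl D) H"
    and eq_im: "\<And>p. p \<in> cyl D \<Longrightarrow>
       Im (exp (- \<i> * complex_of_real \<theta>) * det (cmat In_mat + cscale \<i> (cmat (H p)))) = 0"
    and eq_re: "\<And>p. p \<in> cyl D \<Longrightarrow>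
       Re (exp (- \<i> * complex_of_real \<theta>) * det (mat 1 + cscale \<i> (cmat (space_block (H p))))) > 0"
  shows "\<forall>p \<in> cyl D.
           (row None (H p) \<noteq> 0 \<longrightarrow>
              psd (lin_mat \<theta> (H p)) \<and> rank (lin_mat \<theta> (H p)) = CARD('n)
              \<and> null_space (lin_mat \<theta> (H p)) = span {row None (H p)})
         \<and> (row None (H p) = 0 \<longrightarrow>
              psd (lin_mat \<theta> (H p)) \<and> rank (lin_mat \<theta> (H p)) = 1)"
proof -
  have "slag_hessian (H p) \<theta>" if p: "p \<in> cyl D" for p
  proof
    show "transpose (H p) = H p"
      using hessian_symmetric[OF grad hess C2 p] cyl_subset_closure_interior[OF D_domain(1)] p
      by blast
  qed (use eq_im[OF p] eq_re[OF p] in simp_all)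
  then show ?thesis
    using slag_hessian.M_noncritical slag_hessian.M_critical by blast
qed

end
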